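(* Let $\operatorname{char}K\neq2$ and let $\mathbf J=\mathrm{Kan}(\mathbf P)=\mathbf P\oplus\bar{\mathbf P}$ be the Kantor double of the Poisson superalgebra $\mathbf P=\mathrm{Poisson}(V_0,V_1,V_2)$. Then $\mathbf J$ is generated as a Jordan superalgebra by $\{V_0,V_1,V_2,\bar1\}$.
   Context: $H_\infty=\Lambda(x_i,y_i\mid i\ge0)$ is the Grassmann algebra over $K$ on odd generators, a Poisson superalgebra with $\{y_i,x_j\}=\delta_{ij}$, $\{x_i,x_j\}=\{y_i,y_j\}=0$ (extended by super Leibniz rule); $\widetilde H$ is its completion by formal sums $c\cdot1+\sum\lambda_{\alpha,\beta}x^\alpha y^\beta$ over monomials with $\beta\ne0$ and (largest index in $\alpha$) $<$ (largest index in $\beta$), with extended operations. $V_i=\sum_{k\ge0}\big(\prod_{n=0}^{k-1}x_{i+3n}x_{i+3n+1}\big)y_{i+3k}$; $\mathbf P$ is the smallest unital subalgebra of $\widetilde H$ containing $V_0,V_1,V_2$ closed under product and bracket. Kantor double: $\mathrm{Kan}(\mathbf P)=\mathbf P\oplus\bar{\mathbf P}$, $\bar{\mathbf P}$ a copy of $\mathbf P$ with opposite parity $|\bar a|=1-|a|$, product $a\bullet b=ab$, $\bar a\bullet b=(-1)^{|b|}\overline{ab}$, $a\bullet\bar b=\overline{ab}$, $\bar a\bullet\bar b=(-1)^{|b|}\{a,b\}$; it is a Jordan superalgebra. *)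

theory Defs
  imports Main
begin

text \<open>Odd generators x_i (X i) and y_i (Y i). Total order used to fix the
standard monomial basis: all x's before all y's, each in increasing index order,
so the basis monomial indexed by a finite set S of generators is x^alpha y^beta.\<close>

datatype gen = X nat | Y nat

fun gless :: "gen \<Rightarrow> gen \<Rightarrow> bool" where
  "gless (X i) (X j) = (i < j)"
| "gless (X i) (Y j) = True"
| "gless (Y i) (X j) = False"
| "gless (Y i) (Y j) = (i < j)"

text \<open>Formal sums (elements of the completion): coefficient functions on monomials.
Only finite monomials carry nonzero coefficients for the elements considered.\<close>

type_synonym 'k ser = "gen set \<Rightarrow> 'k"

definition sadd :: "'k::field ser \<Rightarrow> 'k ser \<Rightarrow> 'k ser" where
  "sadd f g = (\<lambda>M. f M + g M)"

definition ssmult :: "'k::field \<Rightarrow> 'k ser \<Rightarrow> 'k ser" where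
  "ssmult c f = (\<lambda>M. c * f M)"

definition szero :: "'k::field ser" where
  "szero = (\<lambda>M. 0)"

definition sone :: "'k::field ser" where
  "sone = (\<lambda>M. if M = {} then 1 else 0)"

text \<open>Sign of the product of basis monomials e_S * e_T (S, T disjoint):
(-1) to the number of inversions.\<close>

definition msign :: "gen set \<Rightarrow> gen set \<Rightarrow> 'k::field" where
  "msign S T = (-1) ^ card {(a, b). a \<in> S \<and> b \<in> T \<and> gless b a}"

definition smul :: "'k::field ser \<Rightarrow> 'k ser \<Rightarrow> 'k ser" where
  "smul f g = (\<lambda>M. \<Sum>S\<in>Pow M. msign S (M - S) * f S * g (M - S))"

definition lder :: "gen \<Rightarrow> 'k::field ser \<Rightarrow> 'k ser" where
  "lder g f = (\<lambda>M. if g \<in> M then 0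
      else (-1) ^ card {h \<in> M. gless h g} * f (insert g M))"

definition rder :: "gen \<Rightarrow> 'k::field ser \<Rightarrow> 'k ser" where
  "rder g f = (\<lambda>M. if g \<in> M then 0
      else (-1) ^ card {h \<in> M. gless g h} * f (insert g M))"

text \<open>Poisson bracket with {y_i,x_j} = delta_ij, {x_i,x_j} = {y_i,y_j} = 0, extended by
the super Leibniz rule: {f,g} = sum_i (f d<-_{y_i}) (d->_{x_i} g) + (f d<-_{x_i}) (d->_{y_i} g).
Coefficientwise this is a sum over i with only finitely many nonzero terms on the
completion H~ (the constraint max alpha < max beta guarantees this).\<close>

definition bterm :: "'k::field ser \<Rightarrow> 'k ser \<Rightarrow> gen set \<Rightarrow> nat \<Rightarrow> 'k" where
  "bterm f g M i = smul (rder (Y i) f) (lder (X i) g) M + smul (rder (X i) f) (lder (Y i) g) M"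

definition sbr :: "'k::field ser \<Rightarrow> 'k ser \<Rightarrow> 'k ser" where
  "sbr f g = (\<lambda>M. \<Sum>i\<in>{i. bterm f g M i \<noteq> 0}. bterm f g M i)"

text \<open>Parity automorphism: a_0 + a_1 |-> a_0 - a_1.\<close>

definition spar :: "'k::field ser \<Rightarrow> 'k ser" where
  "spar f = (\<lambda>M. (-1) ^ card M * f M)"

definition Vser :: "nat \<Rightarrow> 'k::field ser" where
  "Vser i = (\<lambda>M. if \<exists>k. M = {X (i + 3 * n) | n. n < k} \<union> {X (i + 3 * n + 1) | n. n < k}
                           \<union> {Y (i + 3 * k)} then 1 else 0)"

inductive_set Pois :: "'k::field ser set" where
  one: "sone \<in> Pois"
| gen: "i < 3 \<Longrightarrow> Vser i \<in> Pois"
| add: "f \<in> Pois \<Longrightarrow> g \<in> Pois \<Longrightarrow> sadd f g \<in> Pois"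
| smult: "f \<in> Pois \<Longrightarrow> ssmult c f \<in> Pois"
| mul: "f \<in> Pois \<Longrightarrow> g \<in> Pois \<Longrightarrow> smul f g \<in> Pois"
| br: "f \<in> Pois \<Longrightarrow> g \<in> Pois \<Longrightarrow> sbr f g \<in> Pois"

section \<open>Kantor double Kan(P) = P + bar P, elements written as pairs (a, a') = a + bar a'\<close>

definition kadd :: "'k::field ser \<times> 'k ser \<Rightarrow> 'k ser \<times> 'k ser \<Rightarrow> 'k ser \<times> 'k ser" where
  "kadd u v = (sadd (fst u) (fst v), sadd (snd u) (snd v))"

definition ksmult :: "'k::field \<Rightarrow> 'k ser \<times> 'k ser \<Rightarrow> 'k ser \<times> 'k ser" where
  "ksmult c u = (ssmult c (fst u), ssmult c (snd u))"

text \<open>Bilinear extension of: a.b = ab, bar a . b = (-1)^|b| bar(ab), a . bar b = bar(ab),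
bar a . bar b = (-1)^|b| {a,b}.\<close>

definition kmul :: "'k::field ser \<times> 'k ser \<Rightarrow> 'k ser \<times> 'k ser \<Rightarrow> 'k ser \<times> 'k ser" where
  "kmul u v = (sadd (smul (fst u) (fst v)) (sbr (snd u) (spar (snd v))),
               sadd (smul (snd u) (spar (fst v))) (smul (fst u) (snd v)))"

inductive_set Jgen :: "('k::field ser \<times> 'k ser) set" where
  unit: "(sone, szero) \<in> Jgen"
| genV: "i < 3 \<Longrightarrow> (Vser i, szero) \<in> Jgen"
| genbar1: "(szero, sone) \<in> Jgen"
| add: "u \<in> Jgen \<Longrightarrow> v \<in> Jgen \<Longrightarrow> kadd u v \<in> Jgen"
| smult: "u \<in> Jgen \<Longrightarrow> ksmult c u \<in> Jgen"
| mul: "u \<in> Jgen \<Longrightarrow> v \<in> Jgen \<Longrightarrow> kmul u v \<in> Jgen"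

end

theory Submission
  imports Defs
begin

text \<open>P is stable under the parity automorphism, which preserves sums, products and
brackets and sends each odd generator V_i to -V_i; hence both components of a Kantor
product of elements of P \<times> P lie in P. Conversely, multiplying by bar 1 turns a into
bar a, and bar a \<bullet> bar b = +-{a, b}, so every product and bracket used to build P from
V_0, V_1, V_2 is reached inside the Jordan algebra generated by V_0, V_1, V_2, bar 1.\<close>

text \<open>Coefficients at infinite sets of generators are junk: smul and sbr produce 0 there,
so sone is a unit only for series that vanish at infinite sets.\<close>

definition finitary :: "'k::field ser \<Rightarrow> bool" where
  "finitary f \<longleftrightarrow> (\<forall>M. infinite M \<longrightarrow> f M = 0)"

lemma finitary_sone: "finitary sone"
  by (simp add: finitary_def sone_def)

lemma finitary_Vser: "finitary (Vser i)"
proof -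
  have "finite ({X (i + 3 * n) | n. n < k} \<union> {X (i + 3 * n + 1) | n. n < k} \<union> {Y (i + 3 * k)})"
    for k
    by (auto intro: finite_image_set)
  then show ?thesis unfolding finitary_def Vser_def by auto
qed

lemma finitary_sadd: "finitary f \<Longrightarrow> finitary g \<Longrightarrow> finitary (sadd f g)"
  by (simp add: finitary_def sadd_def)

lemma finitary_ssmult: "finitary f \<Longrightarrow> finitary (ssmult c f)"
  by (simp add: finitary_def ssmult_def)

lemma finitary_smul: "finitary (smul f g)"
  by (simp add: finitary_def smul_def)

lemma finitary_sbr: "finitary (sbr f g)"
  by (simp add: finitary_def sbr_def bterm_def smul_def)

lemma finitary_spar: "finitary f \<Longrightarrow> finitary (spar f)"
  by (simp add: finitary_def spar_def)

lemma Pois_finitary: "f \<in> Pois \<Longrightarrow> finitary f"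
  by (induction f rule: Pois.induct)
     (simp_all add: finitary_sone finitary_Vser finitary_sadd finitary_ssmult
        finitary_smul finitary_sbr)

lemma szero_in_Pois: "szero \<in> Pois"
proof -
  have "ssmult 0 sone \<in> Pois" by (rule Pois.smult[OF Pois.one])
  then show ?thesis by (simp add: ssmult_def szero_def)
qed

lemma smul_sone_right:
  assumes "finitary f"
  shows "smul f sone = f"
proof
  fix M
  show "smul f sone M = f M"
  proof (cases "finite M")
    case True
    then have "smul f sone M = (\<Sum>S\<in>{M}. msign S (M - S) * f S * sone (M - S))"
      unfolding smul_def by (intro sum.mono_neutral_right) (auto simp: sone_def)
    then show ?thesis by (simp add: msign_def sone_def)
  next
    case False
    with assms show ?thesis by (simp add: smul_def finitary_def)
  qed
qed

lemma smul_sone_left: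
  assumes "finitary f"
  shows "smul sone f = f"
proof
  fix M
  show "smul sone f M = f M"
  proof (cases "finite M")
    case True
    then have "smul sone f M = (\<Sum>S\<in>{{}}. msign S (M - S) * sone S * f (M - S))"
      unfolding smul_def by (intro sum.mono_neutral_right) (auto simp: sone_def)
    then show ?thesis by (simp add: msign_def sone_def)
  next
    case False
    with assms show ?thesis by (simp add: smul_def finitary_def)
  qed
qed

lemma smul_szero_left [simp]: "smul szero g = szero"
  by (simp add: smul_def szero_def fun_eq_iff)

lemma smul_szero_right [simp]: "smul f szero = szero"
  by (simp add: smul_def szero_def fun_eq_iff)

lemma rder_szero [simp]: "rder h szero = szero"
  by (simp add: rder_def szero_def fun_eq_iff)

lemma lder_szero [simp]: "lder h szero = szero"
  by (simp add: lder_def szero_def fun_eq_iff)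

lemma sbr_szero_left [simp]: "sbr szero g = szero"
  by (simp add: sbr_def bterm_def fun_eq_iff) (simp add: szero_def)

lemma sbr_szero_right [simp]: "sbr f szero = szero"
  by (simp add: sbr_def bterm_def fun_eq_iff) (simp add: szero_def)

lemma sadd_szero_left [simp]: "sadd szero g = g"
  by (simp add: sadd_def szero_def)

lemma sadd_szero_right [simp]: "sadd f szero = f"
  by (simp add: sadd_def szero_def)

lemma ssmult_szero [simp]: "ssmult c szero = szero"
  by (simp add: ssmult_def szero_def)

lemma spar_szero [simp]: "spar szero = szero"
  by (simp add: spar_def szero_def)

lemma spar_sone [simp]: "spar sone = sone"
  by (simp add: spar_def sone_def fun_eq_iff)

lemma spar_spar [simp]: "spar (spar f) = f"
  by (simp add: spar_def fun_eq_iff power_mult_distrib[symmetric])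

lemma spar_sadd: "spar (sadd f g) = sadd (spar f) (spar g)"
  by (simp add: spar_def sadd_def fun_eq_iff algebra_simps)

lemma spar_ssmult: "spar (ssmult c f) = ssmult c (spar f)"
  by (simp add: spar_def ssmult_def fun_eq_iff algebra_simps)

lemma smul_sign_twist:
  assumes "finite M"
    and f': "\<And>S. S \<subseteq> M \<Longrightarrow> f' S = c * (-1) ^ card S * f S"
    and g': "\<And>S. S \<subseteq> M \<Longrightarrow> g' S = d * (-1) ^ card S * g S"
  shows "smul f' g' M = c * d * (-1) ^ card M * smul f g M"
proof -
  have "msign S (M - S) * f' S * g' (M - S)
          = c * d * (-1) ^ card M * (msign S (M - S) * f S * g (M - S))" if "S \<subseteq> M" for S
  proof -
    have "card M = card S + card (M - S)"
      using that \<open>finite M\<close> by (metis card_Diff_subset card_mono finite_subset le_add_diff_inverse)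
    then have "(-1::'a) ^ card M = (-1) ^ card S * (-1) ^ card (M - S)"
      by (simp add: power_add)
    then show ?thesis using f'[OF that] g'[of "M - S"] by (simp add: algebra_simps)
  qed
  then show ?thesis unfolding smul_def sum_distrib_left by (intro sum.cong) auto
qed

lemma spar_smul: "spar (smul f g) = smul (spar f) (spar g)"
proof
  fix M
  show "spar (smul f g) M = smul (spar f) (spar g) M"
  proof (cases "finite M")
    case True
    have "smul (spar f) (spar g) M = 1 * 1 * (-1) ^ card M * smul f g M"
      by (rule smul_sign_twist[OF True]) (simp_all add: spar_def)
    then show ?thesis by (simp add: spar_def)
  next
    case False
    then show ?thesis by (simp add: spar_def smul_def)
  qed
qed

lemma bterm_spar:
  assumes "finite M"
  shows "bterm (spar f) (spar g) M i = (-1) ^ card M * bterm f g M i"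
proof -
  have der_spar:
    "rder h (spar f) N = -1 * (-1) ^ card N * rder h f N"
    "lder h (spar g) N = -1 * (-1) ^ card N * lder h g N" if "N \<subseteq> M" for h N
    using finite_subset[OF that \<open>finite M\<close>] by (simp_all add: rder_def lder_def spar_def)
  have "smul (rder h (spar f)) (lder h' (spar g)) M
          = (-1) * (-1) * (-1) ^ card M * smul (rder h f) (lder h' g) M" for h h'
    by (rule smul_sign_twist[OF assms]) (simp_all add: der_spar)
  then show ?thesis by (simp add: bterm_def algebra_simps)
qed

lemma spar_sbr: "spar (sbr f g) = sbr (spar f) (spar g)"
proof
  fix M
  show "spar (sbr f g) M = sbr (spar f) (spar g) M"
  proof (cases "finite M")
    case True
    have "sbr (spar f) (spar g) M = (\<Sum>i | bterm f g M i \<noteq> 0. (-1) ^ card M * bterm f g M i)"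
      unfolding sbr_def bterm_spar[OF True] by simp
    then show ?thesis by (simp add: spar_def sbr_def sum_distrib_left)
  next
    case False
    then show ?thesis by (simp add: spar_def sbr_def bterm_def smul_def)
  qed
qed

lemma Vser_support_odd:
  assumes "Vser i M \<noteq> 0"
  shows "odd (card M)"
proof -
  from assms obtain k where M: "M = (\<lambda>n. X (i + 3 * n)) ` {..<k}
      \<union> (\<lambda>n. X (i + 3 * n + 1)) ` {..<k} \<union> {Y (i + 3 * k)}"
    unfolding Vser_def by (auto split: if_splits)
  have "(\<lambda>n. X (i + 3 * n)) ` {..<k} \<inter> (\<lambda>n. X (i + 3 * n + 1)) ` {..<k} = {}"
    by auto presburger
  moreover have "inj (\<lambda>n. X (i + 3 * n))" "inj (\<lambda>n. X (i + 3 * n + 1))"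
    by (auto simp: inj_def)
  ultimately have "card M = 2 * k + 1"
    unfolding M by (subst card_Un_disjoint, auto simp: card_Un_disjoint card_image inj_on_subset)
  then show ?thesis by simp
qed

lemma spar_Vser: "spar (Vser i) = ssmult (-1) (Vser i)"
proof
  fix M
  show "spar (Vser i) M = ssmult (-1) (Vser i) M"
    using Vser_support_odd[of i M] by (auto simp: spar_def ssmult_def minus_one_power_iff)
qed

lemma Pois_spar: "f \<in> Pois \<Longrightarrow> spar f \<in> Pois"
  by (induction f rule: Pois.induct)
     (simp_all add: spar_sadd spar_ssmult spar_smul spar_sbr spar_Vser
        Pois.intros)

lemma Jgen_subset_Pois_times_Pois: "Jgen \<subseteq> Pois \<times> Pois"
proof
  fix u :: "'k::field ser \<times> 'k ser"
  assume "u \<in> Jgen"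
  then show "u \<in> Pois \<times> Pois"
    by (induction u rule: Jgen.induct)
       (auto simp: kadd_def ksmult_def kmul_def szero_in_Pois
         intro!: Pois.intros Pois_spar)
qed

lemma kadd_base_base: "kadd (f, szero) (g, szero) = (sadd f g, szero)"
  by (simp add: kadd_def)

lemma kadd_base_bar: "kadd (f, szero) (szero, g) = (f, g)"
  by (simp add: kadd_def)

lemma ksmult_base: "ksmult c (f, szero) = (ssmult c f, szero)"
  by (simp add: ksmult_def)

lemma kmul_base_base: "kmul (f, szero) (g, szero) = (smul f g, szero)"
  by (simp add: kmul_def)

lemma kmul_bar_bar: "kmul (szero, f) (szero, g) = (sbr f (spar g), szero)"
  by (simp add: kmul_def)

lemma kmul_base_bar_sone: "finitary f \<Longrightarrow> kmul (f, szero) (szero, sone) = (szero, f)"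
  by (simp add: kmul_def smul_sone_right)

lemma kmul_bar_sone_base: "finitary f \<Longrightarrow> kmul (szero, sone) (f, szero) = (szero, spar f)"
  by (simp add: kmul_def smul_sone_left finitary_spar)

lemma Jgen_bar_of_base:
  assumes "(f, szero) \<in> Jgen" and "finitary f"
  shows "(szero, f) \<in> Jgen" and "(szero, spar f) \<in> Jgen"
  using Jgen.mul[OF assms(1) Jgen.genbar1] Jgen.mul[OF Jgen.genbar1 assms(1)]
  by (simp_all add: kmul_base_bar_sone kmul_bar_sone_base assms(2))

lemma Pois_base_in_Jgen: "f \<in> Pois \<Longrightarrow> (f, szero) \<in> Jgen"
proof (induction f rule: Pois.induct)
  case one
  show ?case by (rule Jgen.unit)
next
  case (gen i)
  then show ?case by (rule Jgen.genV)
next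
  case (add f g)
  from Jgen.add[OF add.IH] show ?case by (simp add: kadd_base_base)
next
  case (smult f c)
  from Jgen.smult[OF smult.IH] show ?case by (simp add: ksmult_base)
next
  case (mul f g)
  from Jgen.mul[OF mul.IH] show ?case by (simp add: kmul_base_base)
next
  case (br f g)
  have "(szero, f) \<in> Jgen" "(szero, spar g) \<in> Jgen"
    using Jgen_bar_of_base br Pois_finitary by blast+
  from Jgen.mul[OF this] show ?case by (simp add: kmul_bar_bar)
qed

lemma Pois_times_Pois_subset_Jgen: "Pois \<times> Pois \<subseteq> Jgen"
proof clarify
  fix f g :: "'k::field ser"
  assume "f \<in> Pois" "g \<in> Pois"
  then have "(f, szero) \<in> Jgen" "(szero, g) \<in> Jgen"
    using Pois_base_in_Jgen Jgen_bar_of_base(1) Pois_finitary by blast+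
  from Jgen.add[OF this] show "(f, g) \<in> Jgen" by (simp add: kadd_base_bar)
qed

theorem lemma12p1:
  assumes "(2::'k::field) \<noteq> 0"
  shows "(Jgen :: ('k ser \<times> 'k ser) set) = Pois \<times> Pois"
  using Jgen_subset_Pois_times_Pois Pois_times_Pois_subset_Jgen by (rule subset_antisym)

end
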